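(* Let $(\mathfrak m,I)$ be a non--degenerate pseudo--complex fundamental graded Lie algebra of $l$-th type with Tanaka prolongation $\mathfrak g=\bigoplus_{i\ge-l}\mathfrak g_i$, and let $\phi(\mathfrak m)\subset\mathfrak n\cong\mathbb{C}^N$ be the corresponding standard real submanifold. For every $X\in\mathfrak g_j$, the infinitesimal CR automorphism of $\phi(\mathfrak m)$ corresponding to $X$ is a weighted homogeneous holomorphic vector field on $\mathbb{C}^N=\mathfrak n$ of weighted degree $j$.
   Context: $(\mathfrak m,I)$: $\mathfrak m=\mathfrak g_{-l}\oplus\dots\oplus\mathfrak g_{-1}$ a real graded Lie algebra generated by $\mathfrak g_{-1}$, $\mathfrak g_{-l}\ne0$, bracket $\mathfrak g_{-1}\times\mathfrak g_{-1}\to\mathfrak g_{-2}$ nondegenerate, $I$ a complex structure on $\mathfrak g_{-1}$ with $[IX,IY]=[X,Y]$. Tanaka prolongation: $\mathfrak g_0$ = grading-preserving derivations of $\mathfrak m$ commuting with $I$ on $\mathfrak g_{-1}$; for $i>0$, $\mathfrak g_i=\{f\in\bigoplus_{j<0}\mathfrak g_j^*\otimes\mathfrak g_{j+i}:f([X,Y])=[f(X),Y]+[X,f(Y)]\ \forall X,Y\in\mathfrak m\}$; this is a finite-dimensional graded Lie algebra containing $\mathfrak m$ as its negative part. With $\mathfrak g_{-1}^{10}=\{X-iIX\}$, $\mathfrak g_{-1}^{01}=\{X+iIX\}$, $\mathfrak n=(\mathfrak g_{-l}\oplus\dots\oplus\mathfrak g_{-2})\otimes\mathbb{C}\oplus\mathfrak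 g_{-1}^{10}$, the standard real submanifold is $\phi(\mathfrak m)$, $\phi(X)=\exp^{-1}(\exp(X)\exp(-\tfrac12(X_{-1}+iIX_{-1})))$, i.e. the inclusion $\exp(\mathfrak m)\subset\exp(\mathfrak n)$ of nilpotent groups in exponential coordinates. The infinitesimal CR automorphism corresponding to $X\in\mathfrak g$ is the holomorphic vector field on $\exp(\mathfrak n)$ whose value at $\exp(Y)$, $Y\in\mathfrak n$, in the left-invariant trivialization $T\exp(\mathfrak n)\cong\mathfrak n$, is $(\mathrm{Ad}(\exp(-Y))X)_{\mathfrak n}$, the component in $\mathfrak m\otimes\mathbb{C}$ projected to $\mathfrak n$ along $\mathfrak g_{-1}^{01}$ (written in exponential coordinates). Weights: coordinates on $\mathfrak g_{-j}\otimes\mathbb{C}$ (resp. $\mathfrak g_{-1}^{10}$) have weight $j$, the corresponding coordinate vector fields weight $-j$; a field $\sum f_u\,\partial_u$ is weighted homogeneous of degree $d$ if each $f_u$ is weighted homogeneous of degree $d+[u]$. *)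

theory Defs
  imports "HOL-Analysis.Analysis"
begin

definition lie_bracket :: "('g::real_vector \<Rightarrow> 'g \<Rightarrow> 'g) \<Rightarrow> bool" where
  "lie_bracket B \<longleftrightarrow>
     (\<forall>x. linear (B x)) \<and> (\<forall>y. linear (\<lambda>x. B x y)) \<and> (\<forall>x. B x x = 0) \<and>
     (\<forall>x y z. B x (B y z) + B y (B z x) + B z (B x y) = 0)"

definition graded :: "(int \<Rightarrow> 'g::real_vector set) \<Rightarrow> bool" where
  "graded G \<longleftrightarrow> (\<forall>i. subspace (G i)) \<and>
     (\<forall>x. \<exists>!c. finite {i. c i \<noteq> 0} \<and> (\<forall>i. c i \<in> G i) \<and> x = (\<Sum>i\<in>{i. c i \<noteq> 0}. c i))"

definition gcomp :: "(int \<Rightarrow> 'g::real_vector set) \<Rightarrow> 'g \<Rightarrow> int \<Rightarrow> 'g" where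
  "gcomp G x = (THE c. finite {i. c i \<noteq> 0} \<and> (\<forall>i. c i \<in> G i) \<and> x = (\<Sum>i\<in>{i. c i \<noteq> 0}. c i))"

definition graded_lie_algebra :: "(int \<Rightarrow> 'g::real_vector set) \<Rightarrow> ('g \<Rightarrow> 'g \<Rightarrow> 'g) \<Rightarrow> bool" where
  "graded_lie_algebra G B \<longleftrightarrow> graded G \<and> lie_bracket B \<and>
     (\<forall>i j x y. x \<in> G i \<longrightarrow> y \<in> G j \<longrightarrow> B x y \<in> G (i + j))"

definition negpart :: "(int \<Rightarrow> 'g::real_vector set) \<Rightarrow> 'g set" where
  "negpart G = {x. \<forall>i\<ge>0. gcomp G x i = 0}"

definition pc_fundamental ::
  "(int \<Rightarrow> 'g::real_vector set) \<Rightarrow> ('g \<Rightarrow> 'g \<Rightarrow> 'g) \<Rightarrow> ('g \<Rightarrow> 'g) \<Rightarrow> int \<Rightarrow> bool" where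
  "pc_fundamental G B I l \<longleftrightarrow>
     l \<ge> 1 \<and> G (-l) \<noteq> {0} \<and> (\<forall>i < -l. G i = {0}) \<and>
     \<comment> \<open>generated by g_{-1}\<close>
     (\<forall>i. -l < i \<and> i \<le> -1 \<longrightarrow> G (i - 1) = span {B x y | x y. x \<in> G (-1) \<and> y \<in> G i}) \<and>
     \<comment> \<open>non-degeneracy of g_{-1} x g_{-1} -> g_{-2}\<close>
     (\<forall>x\<in>G (-1). (\<forall>y\<in>G (-1). B x y = 0) \<longrightarrow> x = 0) \<and>
     \<comment> \<open>I is a complex structure on g_{-1} with [IX,IY] = [X,Y]\<close>
     (\<forall>x\<in>G (-1). I x \<in> G (-1) \<and> I (I x) = - x) \<and>
     (\<forall>x\<in>G (-1). \<forall>y\<in>G (-1). \<forall>a b::real. I (a *\<^sub>R x + b *\<^sub>R y) = a *\<^sub>R I x + b *\<^sub>R I y) \<and>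
     (\<forall>x\<in>G (-1). \<forall>y\<in>G (-1). B (I x) (I y) = B x y)"

text \<open>The nonnegative part of G is (isomorphic to) the Tanaka prolongation of (m, I):
  transitivity (g_i, i>=0, acts faithfully on m via ad) and maximality (every element of
  the prolongation space g_i of the context, i.e. every degree-i derivation of m, commuting
  with I on g_{-1} when i = 0, is ad X restricted to m for some X in G i).\<close>
definition tanaka_prolongation ::
  "(int \<Rightarrow> 'g::real_vector set) \<Rightarrow> ('g \<Rightarrow> 'g \<Rightarrow> 'g) \<Rightarrow> ('g \<Rightarrow> 'g) \<Rightarrow> bool" where
  "tanaka_prolongation G B I \<longleftrightarrow>
     (\<forall>i\<ge>0. \<forall>X\<in>G i. (\<forall>Y\<in>negpart G. B X Y = 0) \<longrightarrow> X = 0) \<and>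
     (\<forall>X\<in>G 0. \<forall>Y\<in>G (-1). B X (I Y) = I (B X Y)) \<and>
     (\<forall>i\<ge>0. \<forall>f. linear f \<and> (\<forall>j<0. \<forall>x\<in>G j. f x \<in> G (j + i)) \<and>
        (\<forall>x\<in>negpart G. \<forall>y\<in>negpart G. f (B x y) = B (f x) y + B x (f y)) \<and>
        (i = 0 \<longrightarrow> (\<forall>x\<in>G (-1). f (I x) = I (f x)))
        \<longrightarrow> (\<exists>X\<in>G i. \<forall>Y\<in>negpart G. B X Y = f Y))"

section \<open>Complexification g \<otimes> C, represented as pairs (a, b) = a + i b\<close>

definition cbr :: "('g::real_vector \<Rightarrow> 'g \<Rightarrow> 'g) \<Rightarrow> 'g \<times> 'g \<Rightarrow> 'g \<times> 'g \<Rightarrow> 'g \<times> 'g" where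
  "cbr B z w = (B (fst z) (fst w) - B (snd z) (snd w), B (fst z) (snd w) + B (snd z) (fst w))"

definition cscale :: "complex \<Rightarrow> 'g::real_vector \<times> 'g \<Rightarrow> 'g \<times> 'g" where
  "cscale t z = (Re t *\<^sub>R fst z - Im t *\<^sub>R snd z, Re t *\<^sub>R snd z + Im t *\<^sub>R fst z)"

definition gcompC :: "(int \<Rightarrow> 'g::real_vector set) \<Rightarrow> 'g \<times> 'g \<Rightarrow> int \<Rightarrow> 'g \<times> 'g" where
  "gcompC G z i = (gcomp G (fst z) i, gcomp G (snd z) i)"

text \<open>g_{-1}^{10} = {X - i I X}, g_{-1}^{01} = {X + i I X}.\<close>
definition g10 :: "(int \<Rightarrow> 'g::real_vector set) \<Rightarrow> ('g \<Rightarrow> 'g) \<Rightarrow> ('g \<times> 'g) set" where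
  "g10 G I = {(x, - I x) | x. x \<in> G (-1)}"

definition g01 :: "(int \<Rightarrow> 'g::real_vector set) \<Rightarrow> ('g \<Rightarrow> 'g) \<Rightarrow> ('g \<times> 'g) set" where
  "g01 G I = {(x, I x) | x. x \<in> G (-1)}"

text \<open>n = (g_{-l} + ... + g_{-2}) \<otimes> C + g_{-1}^{10}.\<close>
definition nset :: "(int \<Rightarrow> 'g::real_vector set) \<Rightarrow> ('g \<Rightarrow> 'g) \<Rightarrow> ('g \<times> 'g) set" where
  "nset G I = {z. (\<forall>i\<ge>0. gcompC G z i = 0) \<and> gcompC G z (-1) \<in> g10 G I}"

definition mCpart :: "(int \<Rightarrow> 'g::real_vector set) \<Rightarrow> 'g \<times> 'g \<Rightarrow> 'g \<times> 'g" where
  "mCpart G z = (\<Sum>i\<in>{i. i < 0 \<and> gcompC G z i \<noteq> 0}. gcompC G z i)"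

definition projn :: "(int \<Rightarrow> 'g::real_vector set) \<Rightarrow> ('g \<Rightarrow> 'g) \<Rightarrow> 'g \<times> 'g \<Rightarrow> 'g \<times> 'g" where
  "projn G I z = (THE u. u \<in> nset G I \<and> mCpart G z - u \<in> g01 G I)"

definition adpow :: "('g::real_vector \<Rightarrow> 'g \<Rightarrow> 'g) \<Rightarrow> 'g \<times> 'g \<Rightarrow> nat \<Rightarrow> 'g \<times> 'g \<Rightarrow> 'g \<times> 'g" where
  "adpow B Y k w = ((cbr B Y) ^^ k) w"

definition nord :: "('g::real_vector \<Rightarrow> 'g \<Rightarrow> 'g) \<Rightarrow> 'g \<times> 'g \<Rightarrow> 'g \<times> 'g \<Rightarrow> nat" where
  "nord B Y w = (LEAST k. adpow B Y k w = 0)"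

text \<open>Ad(exp Y) w = exp(ad Y) w (ad Y nilpotent).\<close>
definition AdExp :: "('g::real_vector \<Rightarrow> 'g \<Rightarrow> 'g) \<Rightarrow> 'g \<times> 'g \<Rightarrow> 'g \<times> 'g \<Rightarrow> 'g \<times> 'g" where
  "AdExp B Y w = (\<Sum>k<nord B Y w. (1 / fact k) *\<^sub>R adpow B Y k w)"

text \<open>Left-trivialized differential of exp at Y: ((1 - exp(-ad Y)) / ad Y) w.\<close>
definition dexpL :: "('g::real_vector \<Rightarrow> 'g \<Rightarrow> 'g) \<Rightarrow> 'g \<times> 'g \<Rightarrow> 'g \<times> 'g \<Rightarrow> 'g \<times> 'g" where
  "dexpL B Y w = (\<Sum>k<nord B Y w. ((-1) ^ k / fact (Suc k)) *\<^sub>R adpow B Y k w)"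

text \<open>Conversion of a left-trivialized tangent vector v at exp(Y) into exponential coordinates.\<close>
definition expcoord ::
  "(int \<Rightarrow> 'g::real_vector set) \<Rightarrow> ('g \<Rightarrow> 'g) \<Rightarrow> ('g \<Rightarrow> 'g \<Rightarrow> 'g) \<Rightarrow> 'g \<times> 'g \<Rightarrow> 'g \<times> 'g \<Rightarrow> 'g \<times> 'g" where
  "expcoord G I B Y v = (THE w. w \<in> nset G I \<and> dexpL B Y w = v)"

text \<open>The infinitesimal CR automorphism corresponding to X, as a map n -> n in exponential
  coordinates: Y \<mapsto> (Ad(exp(-Y)) X)_n, written in exponential coordinates.\<close>
definition inf_cr_aut ::
  "(int \<Rightarrow> 'g::real_vector set) \<Rightarrow> ('g \<Rightarrow> 'g) \<Rightarrow> ('g \<Rightarrow> 'g \<Rightarrow> 'g) \<Rightarrow> 'g \<Rightarrow> 'g \<times> 'g \<Rightarrow> 'g \<times> 'g" where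
  "inf_cr_aut G I B X Y = expcoord G I B Y (projn G I (AdExp B (- Y) (X, 0)))"

definition dil :: "(int \<Rightarrow> 'g::real_vector set) \<Rightarrow> int \<Rightarrow> complex \<Rightarrow> 'g \<times> 'g \<Rightarrow> 'g \<times> 'g" where
  "dil G l t z = (\<Sum>k\<in>{1..l}. cscale (t ^ nat k) (gcompC G z (-k)))"

text \<open>A vector field F = \<Sum> f_u \<partial>_u on n is weighted homogeneous of degree d iff each
  coefficient of a weight-k coordinate vector field is weighted homogeneous of degree d + k;
  stated via the weight-k component of F (coordinates of weight k are the linear
  functionals on the weight-k summand).\<close>
definition weighted_homog_field ::
  "(int \<Rightarrow> 'g::real_vector set) \<Rightarrow> ('g \<Rightarrow> 'g) \<Rightarrow> int \<Rightarrow> ('g \<times> 'g \<Rightarrow> 'g \<times> 'g) \<Rightarrow> int \<Rightarrow> bool" where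
  "weighted_homog_field G I l F d \<longleftrightarrow>
     (\<forall>z\<in>nset G I. \<forall>t::complex. t \<noteq> 0 \<longrightarrow> (\<forall>k\<in>{1..l}.
        gcompC G (F (dil G l t z)) (-k) = cscale (t powi (d + k)) (gcompC G (F z) (-k))))"

end

theory Submission
  imports Defs
begin

text \<open>
  For \<open>t \<noteq> 0\<close> let \<open>D t\<close> act on the complexified degree-\<open>i\<close> component of \<open>g\<close> by
  \<open>t powi (-i)\<close>. Since the bracket respects the grading, \<open>D t\<close> is an automorphism of
  \<open>g \<otimes> \<complex>\<close>; it preserves \<open>n\<close>, \<open>g_{-1}^{01}\<close> and the \<open>m \<otimes> \<complex>\<close>-part, and on \<open>n\<close> it is the
  weighted dilation. Hence it commutes with \<open>Ad(exp(-Y))\<close>, with the projection to \<open>n\<close>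
  and with the left-trivialized differential of \<open>exp\<close>; the latter is the identity plus a
  degree-lowering map, so it is invertible on \<open>n\<close>. As \<open>D t X = t powi (-j) X\<close> for
  \<open>X \<in> g\<^sub>j\<close>, the field \<open>F\<close> of \<open>X\<close> satisfies \<open>F (D t z) = t powi j (D t (F z))\<close>, which
  on the weight-\<open>k\<close> component is the factor \<open>t powi (j + k)\<close>.
\<close>

lemma linear_cscale: "linear (cscale c)"
  by (rule linearI) (simp_all add: cscale_def algebra_simps)

lemma cscale_cscale: "cscale a (cscale b z) = cscale (a * b) z"
  by (simp add: cscale_def algebra_simps prod_eq_iff)

lemma cscale_1 [simp]: "cscale 1 z = z"
  by (simp add: cscale_def)

lemma cscale_0_right [simp]: "cscale c 0 = 0"
  by (simp add: linear_0[OF linear_cscale])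

lemma inj_cscale: assumes "c \<noteq> 0" shows "inj (cscale c)"
proof (rule injI)
  fix z w assume "cscale c z = cscale c w"
  then have "cscale (inverse c) (cscale c z) = cscale (inverse c) (cscale c w)" by simp
  then show "z = w" using assms by (simp add: cscale_cscale)
qed

lemma bilinear_cbr: assumes "bilinear B" shows "bilinear (cbr B)"
  unfolding bilinear_def
  by (intro allI conjI linearI)
    (simp_all add: cbr_def bilinear_ladd[OF assms] bilinear_radd[OF assms] bilinear_lmul[OF assms]
      bilinear_rmul[OF assms] scaleR_right_diff_distrib scaleR_right_distrib)

lemma cbr_cscale_left: "bilinear B \<Longrightarrow> cbr B (cscale c z) w = cscale c (cbr B z w)"
  by (simp add: cbr_def cscale_def bilinear_ladd bilinear_lsub bilinear_lmul algebra_simps)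

lemma cbr_cscale_right: "bilinear B \<Longrightarrow> cbr B z (cscale c w) = cscale c (cbr B z w)"
  by (simp add: cbr_def cscale_def bilinear_radd bilinear_rsub bilinear_rmul algebra_simps)

lemma adpow_0 [simp]: "adpow B Y 0 w = w"
  by (simp add: adpow_def)

lemma adpow_Suc: "adpow B Y (Suc k) w = cbr B Y (adpow B Y k w)"
  by (simp add: adpow_def)

lemma adpow_add: "adpow B Y (m + n) w = adpow B Y m (adpow B Y n w)"
  by (simp add: adpow_def funpow_add)

lemma nord_equivariant:
  assumes "linear L" "inj L" "\<And>k. adpow B Y' k (L w) = L (adpow B Y k w)"
  shows "nord B Y' (L w) = nord B Y w"
proof -
  have "L x = 0 \<longleftrightarrow> x = 0" for x
    using inj_eq[OF assms(2), of x 0] linear_0[OF assms(1)] by simp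
  then have "adpow B Y' k (L w) = 0 \<longleftrightarrow> adpow B Y k w = 0" for k
    using assms(3) by simp
  then show ?thesis unfolding nord_def by simp
qed

lemma
  assumes "linear L" "inj L" "\<And>k. adpow B Y' k (L w) = L (adpow B Y k w)"
  shows AdExp_equivariant: "AdExp B Y' (L w) = L (AdExp B Y w)"
    and dexpL_equivariant: "dexpL B Y' (L w) = L (dexpL B Y w)"
  unfolding AdExp_def dexpL_def nord_equivariant[OF assms]
  by (simp_all add: assms(3) linear_sum[OF assms(1)] linear_cmul[OF assms(1)])

section \<open>Graded vector spaces and the weight dilation\<close>

locale graded_space =
  fixes G :: "int \<Rightarrow> 'g::real_vector set"
  assumes graded: "graded G"
begin

lemma subspace_grade: "subspace (G i)"
  using graded unfolding graded_def by auto

lemma gcomp_spec: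
  "finite {i. gcomp G x i \<noteq> 0} \<and> (\<forall>i. gcomp G x i \<in> G i) \<and>
   x = (\<Sum>i\<in>{i. gcomp G x i \<noteq> 0}. gcomp G x i)"
proof -
  have "\<exists>!c. finite {i. c i \<noteq> 0} \<and> (\<forall>i. c i \<in> G i) \<and> x = (\<Sum>i\<in>{i. c i \<noteq> 0}. c i)"
    using graded unfolding graded_def by blast
  from theI'[OF this] show ?thesis unfolding gcomp_def .
qed

lemma gcomp_in_grade: "gcomp G x i \<in> G i"
  using gcomp_spec by blast

lemma finite_gcomp_support: "finite {i. gcomp G x i \<noteq> 0}"
  using gcomp_spec by blast

lemma sum_gcomp:
  assumes "finite S" "{i. gcomp G x i \<noteq> 0} \<subseteq> S"
  shows "(\<Sum>i\<in>S. gcomp G x i) = x"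
proof -
  have "(\<Sum>i\<in>S. gcomp G x i) = (\<Sum>i\<in>{i. gcomp G x i \<noteq> 0}. gcomp G x i)"
    by (rule sum.mono_neutral_right) (use assms in auto)
  also have "\<dots> = x"
    using gcomp_spec by metis
  finally show ?thesis .
qed

lemma gcomp_unique:
  assumes "finite S" "\<And>i. c i \<in> G i" "\<And>i. i \<notin> S \<Longrightarrow> c i = 0" "x = sum c S"
  shows "gcomp G x = c"
proof -
  have ex1: "\<exists>!c. finite {i. c i \<noteq> 0} \<and> (\<forall>i. c i \<in> G i) \<and> x = (\<Sum>i\<in>{i. c i \<noteq> 0}. c i)"
    using graded unfolding graded_def by blast
  have supp: "{i. c i \<noteq> 0} \<subseteq> S"
    using assms(3) by auto
  have "sum c S = (\<Sum>i\<in>{i. c i \<noteq> 0}. c i)"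
    by (rule sum.mono_neutral_right) (use assms supp in auto)
  then have "finite {i. c i \<noteq> 0} \<and> (\<forall>i. c i \<in> G i) \<and> x = (\<Sum>i\<in>{i. c i \<noteq> 0}. c i)"
    using assms supp finite_subset by auto
  then show ?thesis
    unfolding gcomp_def using the1_equality[OF ex1] by blast
qed

lemma gcomp_homogeneous: "x \<in> G m \<Longrightarrow> gcomp G x i = (if i = m then x else 0)"
  using gcomp_unique[of "{m}" "\<lambda>i. if i = m then x else 0" x] subspace_0[OF subspace_grade]
  by auto

lemma linear_gcomp: "linear (\<lambda>x. gcomp G x i)"
proof (rule linearI)
  fix x y
  let ?S = "{i. gcomp G x i \<noteq> 0} \<union> {i. gcomp G y i \<noteq> 0}"
  have "gcomp G (x + y) = (\<lambda>i. gcomp G x i + gcomp G y i)"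
  proof (rule gcomp_unique)
    show "finite ?S"
      using finite_gcomp_support by auto
    show "gcomp G x i + gcomp G y i \<in> G i" for i
      using subspace_add[OF subspace_grade] gcomp_in_grade by blast
    show "x + y = (\<Sum>i\<in>?S. gcomp G x i + gcomp G y i)"
      using sum_gcomp[of ?S x] sum_gcomp[of ?S y] finite_gcomp_support
      by (auto simp: sum.distrib)
  qed auto
  then show "gcomp G (x + y) i = gcomp G x i + gcomp G y i"
    by simp
next
  fix r x
  have "gcomp G (r *\<^sub>R x) = (\<lambda>i. r *\<^sub>R gcomp G x i)"
  proof (rule gcomp_unique)
    show "r *\<^sub>R gcomp G x i \<in> G i" for i
      using subspace_mul[OF subspace_grade] gcomp_in_grade by blast
    show "r *\<^sub>R x = (\<Sum>i\<in>{i. gcomp G x i \<noteq> 0}. r *\<^sub>R gcomp G x i)"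
      using sum_gcomp[of _ x] finite_gcomp_support by (simp add: scaleR_sum_right[symmetric])
  qed (auto simp: finite_gcomp_support)
  then show "gcomp G (r *\<^sub>R x) i = r *\<^sub>R gcomp G x i"
    by simp
qed

lemma gcomp_eqI: assumes "\<And>i. gcomp G x i = gcomp G y i" shows "x = y"
proof -
  have "gcomp G (x - y) i = 0" for i
    using assms linear_diff[OF linear_gcomp] by simp
  then show ?thesis
    using sum_gcomp[of "{}" "x - y"] by auto
qed

definition gradeC :: "int \<Rightarrow> ('g \<times> 'g) set" where
  "gradeC m = {z. fst z \<in> G m \<and> snd z \<in> G m}"

lemma linear_gcompC: "linear (\<lambda>z. gcompC G z i)"
  by (rule linearI) (simp_all add: gcompC_def linear_add[OF linear_gcomp] linear_cmul[OF linear_gcomp])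

lemmas gcompC_add = linear_add[OF linear_gcompC]
  and gcompC_diff = linear_diff[OF linear_gcompC]
  and gcompC_zero = linear_0[OF linear_gcompC]
  and gcompC_sum = linear_sum[OF linear_gcompC]

lemma gcompC_cscale: "gcompC G (cscale c z) i = cscale c (gcompC G z i)"
  by (simp add: gcompC_def cscale_def linear_add[OF linear_gcomp] linear_diff[OF linear_gcomp]
      linear_cmul[OF linear_gcomp])

lemma gcompC_in_gradeC: "gcompC G z i \<in> gradeC i"
  by (simp add: gcompC_def gradeC_def gcomp_in_grade)

lemma gcompC_homogeneous: "z \<in> gradeC m \<Longrightarrow> gcompC G z i = (if i = m then z else 0)"
  by (auto simp: gcompC_def gradeC_def gcomp_homogeneous zero_prod_def)

lemma finite_gcompC_support: "finite {i. gcompC G z i \<noteq> 0}"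
proof -
  have "{i. gcompC G z i \<noteq> 0} \<subseteq> {i. gcomp G (fst z) i \<noteq> 0} \<union> {i. gcomp G (snd z) i \<noteq> 0}"
    by (auto simp: gcompC_def zero_prod_def)
  then show ?thesis
    using finite_gcomp_support finite_subset by blast
qed

lemma sum_gcompC: "(\<Sum>i\<in>{i. gcompC G z i \<noteq> 0}. gcompC G z i) = z"
proof -
  define S where "S = {i. gcompC G z i \<noteq> 0}"
  have "finite S"
    using finite_gcompC_support by (simp add: S_def)
  moreover have "{i. gcomp G (fst z) i \<noteq> 0} \<subseteq> S" "{i. gcomp G (snd z) i \<noteq> 0} \<subseteq> S"
    by (auto simp: S_def gcompC_def zero_prod_def)
  ultimately have "(\<Sum>i\<in>S. gcomp G (fst z) i) = fst z" "(\<Sum>i\<in>S. gcomp G (snd z) i) = snd z"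
    using sum_gcomp by blast+
  then show ?thesis
    unfolding S_def[symmetric] by (simp add: prod_eq_iff fst_sum snd_sum gcompC_def)
qed

lemma gcompC_eqI: "(\<And>i. gcompC G z i = gcompC G w i) \<Longrightarrow> z = w"
  using gcomp_eqI by (simp add: gcompC_def prod_eq_iff)

definition deg_le :: "int \<Rightarrow> 'g \<times> 'g \<Rightarrow> bool" where
  "deg_le h z \<longleftrightarrow> (\<forall>i>h. gcompC G z i = 0)"

lemma deg_le_mono: "deg_le h z \<Longrightarrow> h \<le> h' \<Longrightarrow> deg_le h' z"
  by (auto simp: deg_le_def)

lemma deg_le_diff: "deg_le h z \<Longrightarrow> deg_le h w \<Longrightarrow> deg_le h (z - w)"
  by (auto simp: deg_le_def gcompC_diff)

lemma deg_le_add: "deg_le h z \<Longrightarrow> deg_le h w \<Longrightarrow> deg_le h (z + w)"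
  by (auto simp: deg_le_def gcompC_add)

lemma deg_le_scaleR: "deg_le h z \<Longrightarrow> deg_le h (r *\<^sub>R z)"
  by (auto simp: deg_le_def linear_cmul[OF linear_gcompC])

lemma deg_le_sum: "(\<And>k. k \<in> S \<Longrightarrow> deg_le h (f k)) \<Longrightarrow> deg_le h (sum f S)"
  by (auto simp: deg_le_def gcompC_sum intro: sum.neutral)

lemma deg_le_exists: "\<exists>h. deg_le h z"
proof -
  have "deg_le (Max (insert 0 {i. gcompC G z i \<noteq> 0})) z"
    unfolding deg_le_def using finite_gcompC_support[of z] by (auto simp: not_less[symmetric])
  then show ?thesis ..
qed

text \<open>Unlike \<^const>\<open>dil\<close>, which only sees degrees \<open>-l..-1\<close>, this dilation acts on every degree,
  so that it is an automorphism of the complexified bracket.\<close>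

definition dilation :: "complex \<Rightarrow> 'g \<times> 'g \<Rightarrow> 'g \<times> 'g" where
  "dilation t z = (\<Sum>i\<in>{i. gcompC G z i \<noteq> 0}. cscale (t powi (-i)) (gcompC G z i))"

lemma gcompC_dilation: "gcompC G (dilation t z) i = cscale (t powi (-i)) (gcompC G z i)"
proof -
  have "gcompC G (dilation t z) i =
      (\<Sum>m\<in>{i. gcompC G z i \<noteq> 0}. if m = i then cscale (t powi (-m)) (gcompC G z m) else 0)"
    unfolding dilation_def gcompC_sum
    by (intro sum.cong) (simp_all add: gcompC_cscale gcompC_homogeneous[OF gcompC_in_gradeC])
  also have "\<dots> = cscale (t powi (-i)) (gcompC G z i)"
    using finite_gcompC_support[of z] by (auto simp: sum.delta')
  finally show ?thesis .
qed

lemma linear_dilation: "linear (dilation t)"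
  by (rule linearI; rule gcompC_eqI)
    (simp_all add: gcompC_dilation gcompC_add linear_cmul[OF linear_gcompC]
      linear_add[OF linear_cscale] linear_cmul[OF linear_cscale])

lemma dilation_cscale: "dilation t (cscale c z) = cscale c (dilation t z)"
  by (rule gcompC_eqI) (simp add: gcompC_dilation gcompC_cscale cscale_cscale mult.commute)

lemma dilation_homogeneous: "z \<in> gradeC m \<Longrightarrow> dilation t z = cscale (t powi (-m)) z"
  by (rule gcompC_eqI) (simp add: gcompC_dilation gcompC_cscale gcompC_homogeneous)

lemma inj_dilation: assumes "t \<noteq> 0" shows "inj (dilation t)"
proof (rule injI, rule gcompC_eqI)
  fix z w i assume "dilation t z = dilation t w"
  then have "cscale (t powi (-i)) (gcompC G z i) = cscale (t powi (-i)) (gcompC G w i)"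
    by (metis gcompC_dilation)
  then show "gcompC G z i = gcompC G w i"
    using injD[OF inj_cscale, of "t powi (-i)"] assms by (simp add: power_int_not_zero)
qed

end

locale graded_bracket = graded_space G for G :: "int \<Rightarrow> 'g::real_vector set" +
  fixes B :: "'g \<Rightarrow> 'g \<Rightarrow> 'g"
  assumes bilinear_bracket: "bilinear B"
    and bracket_grade: "x \<in> G i \<Longrightarrow> y \<in> G j \<Longrightarrow> B x y \<in> G (i + j)"
begin

lemma cbr_gradeC: "z \<in> gradeC m \<Longrightarrow> w \<in> gradeC n \<Longrightarrow> cbr B z w \<in> gradeC (m + n)"
  unfolding gradeC_def cbr_def
  using bracket_grade subspace_add[OF subspace_grade] subspace_diff[OF subspace_grade] by auto

lemma cbr_eq_sum_gcompC:
  "cbr B z w = (\<Sum>m\<in>{i. gcompC G z i \<noteq> 0}. \<Sum>n\<in>{i. gcompC G w i \<noteq> 0}.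
     cbr B (gcompC G z m) (gcompC G w n))"
  using bilinear_sum[OF bilinear_cbr[OF bilinear_bracket], of "\<lambda>i. gcompC G z i"
      "{i. gcompC G z i \<noteq> 0}" "\<lambda>i. gcompC G w i" "{i. gcompC G w i \<noteq> 0}"]
  by (simp add: sum_gcompC sum.cartesian_product)

lemma dilation_cbr:
  assumes "t \<noteq> 0"
  shows "dilation t (cbr B z w) = cbr B (dilation t z) (dilation t w)"
proof -
  let ?Sz = "{i. gcompC G z i \<noteq> 0}" and ?Sw = "{i. gcompC G w i \<noteq> 0}"
  have powi: "t powi (- m - n) = t powi (-n) * t powi (-m)" for m n
    using power_int_add[of t "-m" "-n"] assms by (simp add: mult.commute)
  have "dilation t (cbr B z w) =
      (\<Sum>m\<in>?Sz. \<Sum>n\<in>?Sw. dilation t (cbr B (gcompC G z m) (gcompC G w n)))"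
    by (subst cbr_eq_sum_gcompC) (simp add: linear_sum[OF linear_dilation])
  also have "\<dots> = (\<Sum>m\<in>?Sz. \<Sum>n\<in>?Sw.
      cbr B (cscale (t powi (-m)) (gcompC G z m)) (cscale (t powi (-n)) (gcompC G w n)))"
    by (intro sum.cong refl)
      (simp add: dilation_homogeneous[OF cbr_gradeC[OF gcompC_in_gradeC gcompC_in_gradeC]] powi
        cbr_cscale_left[OF bilinear_bracket] cbr_cscale_right[OF bilinear_bracket] cscale_cscale)
  also have "\<dots> = cbr B (dilation t z) (dilation t w)"
    unfolding dilation_def
    by (simp add: bilinear_sum[OF bilinear_cbr[OF bilinear_bracket]] sum.cartesian_product)
  finally show ?thesis .
qed

lemma linear_adpow: "linear (adpow B Y k)"
proof -
  have "linear (cbr B Y)"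
    using bilinear_cbr[OF bilinear_bracket] unfolding bilinear_def by blast
  then have "linear (cbr B Y ^^ k)"
    by (induction k) (auto simp: linear_compose id_def intro: linearI)
  then show ?thesis
    by (simp add: adpow_def[abs_def])
qed

lemma adpow_dilation:
  "t \<noteq> 0 \<Longrightarrow> adpow B (dilation t Y) k (dilation t w) = dilation t (adpow B Y k w)"
  by (induction k) (simp_all add: adpow_Suc dilation_cbr)

lemma adpow_cscale: "adpow B Y k (cscale c w) = cscale c (adpow B Y k w)"
  by (induction k) (simp_all add: adpow_Suc cbr_cscale_right[OF bilinear_bracket])

lemma
  assumes "t \<noteq> 0"
  shows AdExp_dilation: "AdExp B (dilation t Y) (dilation t w) = dilation t (AdExp B Y w)"
    and dexpL_dilation: "dexpL B (dilation t Y) (dilation t w) = dilation t (dexpL B Y w)"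
  using AdExp_equivariant dexpL_equivariant linear_dilation inj_dilation[OF assms]
    adpow_dilation[OF assms] by blast+

lemma
  assumes "c \<noteq> 0"
  shows AdExp_cscale: "AdExp B Y (cscale c w) = cscale c (AdExp B Y w)"
    and dexpL_cscale: "dexpL B Y (cscale c w) = cscale c (dexpL B Y w)"
  using AdExp_equivariant dexpL_equivariant linear_cscale inj_cscale[OF assms] adpow_cscale
  by blast+

lemma deg_le_cbr: assumes "deg_le a z" "deg_le b w" shows "deg_le (a + b) (cbr B z w)"
  unfolding deg_le_def
proof (intro allI impI)
  fix i assume i: "i > a + b"
  have "gcompC G (cbr B z w) i = (\<Sum>m\<in>{i. gcompC G z i \<noteq> 0}. \<Sum>n\<in>{i. gcompC G w i \<noteq> 0}.
     gcompC G (cbr B (gcompC G z m) (gcompC G w n)) i)"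
    by (subst cbr_eq_sum_gcompC) (simp add: gcompC_sum)
  also have "\<dots> = 0"
  proof (intro sum.neutral ballI)
    fix m n assume "m \<in> {i. gcompC G z i \<noteq> 0}" "n \<in> {i. gcompC G w i \<noteq> 0}"
    then have "m \<le> a" "n \<le> b"
      using assms unfolding deg_le_def by (auto simp: not_less[symmetric])
    then show "gcompC G (cbr B (gcompC G z m) (gcompC G w n)) i = 0"
      using i by (simp add: gcompC_homogeneous[OF cbr_gradeC[OF gcompC_in_gradeC gcompC_in_gradeC]])
  qed
  finally show "gcompC G (cbr B z w) i = 0" .
qed

lemma deg_le_adpow: "deg_le (-1) Y \<Longrightarrow> deg_le h w \<Longrightarrow> deg_le (h - int k) (adpow B Y k w)"
proof (induction k)
  case (Suc k)
  then have "deg_le (-1 + (h - int k)) (cbr B Y (adpow B Y k w))"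
    by (intro deg_le_cbr)
  then show ?case
    by (simp add: adpow_Suc algebra_simps)
qed simp

end

section \<open>The pseudo-complex structure and the projection to n\<close>

locale pseudo_complex = graded_bracket G B for G :: "int \<Rightarrow> 'g::real_vector set" and B +
  fixes I :: "'g \<Rightarrow> 'g" and l :: int
  assumes grade_below: "i < -l \<Longrightarrow> G i = {0}"
    and complex_structure_closed: "x \<in> G (-1) \<Longrightarrow> I x \<in> G (-1)"
    and complex_structure_square: "x \<in> G (-1) \<Longrightarrow> I (I x) = - x"
    and complex_structure_linear:
      "x \<in> G (-1) \<Longrightarrow> y \<in> G (-1) \<Longrightarrow> I (a *\<^sub>R x + b *\<^sub>R y) = a *\<^sub>R I x + b *\<^sub>R I y"
begin

lemma gcompC_below: "i < -l \<Longrightarrow> gcompC G z i = 0"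
  using gcompC_in_gradeC[of z i] grade_below by (simp add: gradeC_def prod_eq_iff gcompC_def)

lemma deg_le_below: assumes "deg_le h z" "h < -l" shows "z = 0"
proof (rule gcompC_eqI)
  fix i show "gcompC G z i = gcompC G 0 i"
    using assms gcompC_below[of i z] by (cases "i > h") (auto simp: deg_le_def gcompC_zero)
qed

lemmas grade_minus1 = subspace_add[OF subspace_grade[of "-1"]] subspace_diff[OF subspace_grade[of "-1"]]
  subspace_mul[OF subspace_grade[of "-1"]] subspace_neg[OF subspace_grade[of "-1"]]
  subspace_0[OF subspace_grade[of "-1"]]

lemma complex_structure_add: "x \<in> G (-1) \<Longrightarrow> y \<in> G (-1) \<Longrightarrow> I (x + y) = I x + I y"
  using complex_structure_linear[of x y 1 1] by simp

lemma complex_structure_diff: "x \<in> G (-1) \<Longrightarrow> y \<in> G (-1) \<Longrightarrow> I (x - y) = I x - I y"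
  using complex_structure_linear[of x y 1 "-1"] by simp

lemma complex_structure_scaleR: "x \<in> G (-1) \<Longrightarrow> I (a *\<^sub>R x) = a *\<^sub>R I x"
  using complex_structure_linear[of x x a 0] by simp

lemma complex_structure_0: "I 0 = 0"
  using complex_structure_scaleR[OF grade_minus1(5), of 0] by simp

lemma g10_iff: "z \<in> g10 G I \<longleftrightarrow> fst z \<in> G (-1) \<and> snd z = - I (fst z)"
  unfolding g10_def by (cases z) auto

lemma g01_iff: "z \<in> g01 G I \<longleftrightarrow> fst z \<in> G (-1) \<and> snd z = I (fst z)"
  unfolding g01_def by (cases z) auto

lemma g01_gradeC: "z \<in> g01 G I \<Longrightarrow> z \<in> gradeC (-1)"
  by (auto simp: g01_iff gradeC_def complex_structure_closed)

lemma g10_cscale: "z \<in> g10 G I \<Longrightarrow> cscale c z \<in> g10 G I"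
  by (auto simp: g10_iff cscale_def grade_minus1 complex_structure_closed complex_structure_add
      complex_structure_diff complex_structure_scaleR complex_structure_square algebra_simps)

lemma g01_cscale: "z \<in> g01 G I \<Longrightarrow> cscale c z \<in> g01 G I"
  by (auto simp: g01_iff cscale_def grade_minus1 complex_structure_closed complex_structure_add
      complex_structure_diff complex_structure_scaleR complex_structure_square algebra_simps)

lemma g10_diff: "z \<in> g10 G I \<Longrightarrow> w \<in> g10 G I \<Longrightarrow> z - w \<in> g10 G I"
  by (auto simp: g10_iff grade_minus1 complex_structure_diff)

lemma g01_diff: "z \<in> g01 G I \<Longrightarrow> w \<in> g01 G I \<Longrightarrow> z - w \<in> g01 G I"
  by (auto simp: g01_iff grade_minus1 complex_structure_diff)

lemma g10_g01_eq_0: assumes "z \<in> g10 G I" "z \<in> g01 G I" shows "z = 0"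
proof -
  have x: "fst z \<in> G (-1)" and "- I (fst z) = I (fst z)" and s: "snd z = I (fst z)"
    using assms by (auto simp: g10_iff g01_iff)
  then have "I (fst z) = 0"
    by (metis scaleR_half_double add.right_inverse scale_zero_right)
  then have "fst z = 0"
    using complex_structure_square[OF x] complex_structure_0 by (metis neg_0_equal_iff_equal)
  then show ?thesis
    using s complex_structure_0 by (simp add: prod_eq_iff)
qed

lemma gradeC_minus1_decomp:
  assumes "u \<in> gradeC (-1)"
  obtains p q where "p \<in> g10 G I" "q \<in> g01 G I" "u = p + q"
proof -
  obtain a b where u: "u = (a, b)" and ab: "a \<in> G (-1)" "b \<in> G (-1)"
    using assms by (cases u) (auto simp: gradeC_def)
  have Ib: "I b \<in> G (-1)"
    using ab complex_structure_closed by simp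
  define y where "y = (1/2) *\<^sub>R (a - I b)"
  have y: "y \<in> G (-1)"
    unfolding y_def using ab Ib by (simp add: grade_minus1)
  have "I y = (1/2) *\<^sub>R (I a + b)"
    unfolding y_def using ab Ib
    by (simp add: complex_structure_scaleR complex_structure_diff complex_structure_square grade_minus1)
  then have "I y + I y = I a + b"
    by (metis scaleR_half_double scaleR_right_distrib)
  then have b: "b = I y + I y - I a"
    by (simp add: algebra_simps)
  have "I (a - y) = I a - I y"
    by (rule complex_structure_diff[OF ab(1) y])
  then have "b - I y = - I (a - y)"
    by (subst b) (simp add: algebra_simps)
  then have "(a - y, b - I y) \<in> g10 G I"
    using ab y by (simp add: g10_iff grade_minus1)
  moreover have "(y, I y) \<in> g01 G I"
    using y by (simp add: g01_iff)
  ultimately show ?thesis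
    using that[of "(a - y, b - I y)" "(y, I y)"] u by simp
qed

lemma nset_iff: "z \<in> nset G I \<longleftrightarrow> deg_le (-1) z \<and> gcompC G z (-1) \<in> g10 G I"
  by (auto simp: nset_def deg_le_def)

lemma nset_diff: "z \<in> nset G I \<Longrightarrow> w \<in> nset G I \<Longrightarrow> z - w \<in> nset G I"
  by (simp add: nset_iff deg_le_diff gcompC_diff g10_diff)

lemma nset_cscale: "z \<in> nset G I \<Longrightarrow> cscale c z \<in> nset G I"
  by (simp add: nset_iff deg_le_def gcompC_cscale g10_cscale)

lemma nset_dilation: "z \<in> nset G I \<Longrightarrow> dilation t z \<in> nset G I"
  by (simp add: nset_iff deg_le_def gcompC_dilation g10_cscale)

lemma g01_dilation: "z \<in> g01 G I \<Longrightarrow> dilation t z \<in> g01 G I"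
  using dilation_homogeneous[OF g01_gradeC] g01_cscale by simp

lemma nset_g01_eq_0: assumes "z \<in> nset G I" "z \<in> g01 G I" shows "z = 0"
proof -
  have "gcompC G z (-1) = z"
    using gcompC_homogeneous[OF g01_gradeC[OF assms(2)]] by simp
  then show ?thesis
    using assms g10_g01_eq_0 by (simp add: nset_iff)
qed

lemma gcompC_mCpart: "gcompC G (mCpart G z) i = (if i < 0 then gcompC G z i else 0)"
proof -
  have fin: "finite {i. i < 0 \<and> gcompC G z i \<noteq> 0}"
    using finite_gcompC_support[of z] by (rule rev_finite_subset) auto
  have "gcompC G (mCpart G z) i =
      (\<Sum>m\<in>{i. i < 0 \<and> gcompC G z i \<noteq> 0}. if i = m then gcompC G z m else 0)"
    unfolding mCpart_def gcompC_sum by (simp add: gcompC_homogeneous[OF gcompC_in_gradeC])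
  also have "\<dots> = (if i < 0 then gcompC G z i else 0)"
    using fin by (auto simp: sum.delta)
  finally show ?thesis .
qed

lemma mCpart_dilation: "mCpart G (dilation t z) = dilation t (mCpart G z)"
  by (rule gcompC_eqI) (simp add: gcompC_dilation gcompC_mCpart)

lemma mCpart_cscale: "mCpart G (cscale c z) = cscale c (mCpart G z)"
  by (rule gcompC_eqI) (simp add: gcompC_cscale gcompC_mCpart)

lemma ex1_projn: "\<exists>!p. p \<in> nset G I \<and> mCpart G u - p \<in> g01 G I"
proof -
  obtain p q where p: "p \<in> g10 G I" and q: "q \<in> g01 G I" and u: "gcompC G u (-1) = p + q"
    using gradeC_minus1_decomp[OF gcompC_in_gradeC] by metis
  have gcompC_q: "gcompC G q i = (if i = -1 then q else 0)" for i
    using gcompC_homogeneous[OF g01_gradeC[OF q]] .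
  have in_nset: "mCpart G u - q \<in> nset G I"
    using p by (simp add: nset_iff deg_le_def gcompC_diff gcompC_mCpart gcompC_q u)
  show ?thesis
  proof (rule ex1I[of _ "mCpart G u - q"])
    show "mCpart G u - q \<in> nset G I \<and> mCpart G u - (mCpart G u - q) \<in> g01 G I"
      using in_nset q by simp
  next
    fix p' assume p': "p' \<in> nset G I \<and> mCpart G u - p' \<in> g01 G I"
    have "q - (mCpart G u - p') = p' - (mCpart G u - q)"
      by (simp add: algebra_simps)
    then have "p' - (mCpart G u - q) \<in> g01 G I"
      using g01_diff[OF q] p' by metis
    moreover have "p' - (mCpart G u - q) \<in> nset G I"
      using nset_diff in_nset p' by blast
    ultimately show "p' = mCpart G u - q"
      using nset_g01_eq_0 by (metis eq_iff_diff_eq_0)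
  qed
qed

lemma projn_spec: "projn G I u \<in> nset G I \<and> mCpart G u - projn G I u \<in> g01 G I"
  unfolding projn_def by (rule theI'[OF ex1_projn])

lemma projn_equivariant:
  assumes "linear L" "\<And>z. z \<in> nset G I \<Longrightarrow> L z \<in> nset G I"
    and "\<And>z. z \<in> g01 G I \<Longrightarrow> L z \<in> g01 G I" and "\<And>z. mCpart G (L z) = L (mCpart G z)"
  shows "projn G I (L u) = L (projn G I u)"
proof -
  have "L (projn G I u) \<in> nset G I \<and> mCpart G (L u) - L (projn G I u) \<in> g01 G I"
    using projn_spec[of u] assms by (metis linear_diff)
  then show ?thesis
    unfolding projn_def by (rule the1_equality[OF ex1_projn])
qed

section \<open>Nilpotency and the differential of the exponential map\<close>

lemma adpow_eq_0:
  assumes "deg_le (-1) Y" "deg_le h w" "h + l < int k"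
  shows "adpow B Y k w = 0"
  using deg_le_below[OF deg_le_adpow[OF assms(1,2)]] assms(3) by simp

text \<open>\<^const>\<open>nord\<close> is a \<open>LEAST\<close>; nilpotency of \<open>ad Y\<close> guarantees that it is attained, so the
  series may be cut off anywhere beyond the nilpotency bound.\<close>

lemma sum_nord_eq_sum:
  assumes "deg_le (-1) Y" "deg_le h w" "h + l < int N"
  shows "(\<Sum>k<nord B Y w. f k *\<^sub>R adpow B Y k w) = (\<Sum>k<N. f k *\<^sub>R adpow B Y k w)"
proof -
  have N: "adpow B Y N w = 0"
    using adpow_eq_0[OF assms] .
  then have "nord B Y w \<le> N"
    unfolding nord_def by (rule Least_le)
  moreover have "adpow B Y (nord B Y w) w = 0"
    unfolding nord_def using N by (rule LeastI)
  then have "adpow B Y k w = 0" if "nord B Y w \<le> k" for k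
    using adpow_add[of B Y "k - nord B Y w" "nord B Y w" w] that linear_0[OF linear_adpow] by simp
  ultimately show ?thesis
    by (intro sum.mono_neutral_left) auto
qed

lemma dexpL_eq_sum:
  assumes "deg_le (-1) Y" "deg_le h w" "h + l < int N"
  shows "dexpL B Y w = (\<Sum>k<N. ((-1) ^ k / fact (Suc k)) *\<^sub>R adpow B Y k w)"
  unfolding dexpL_def by (rule sum_nord_eq_sum[OF assms])

lemma linear_dexpL: assumes Y: "deg_le (-1) Y" shows "linear (dexpL B Y)"
proof (rule linearI)
  fix x y
  obtain hx hy where "deg_le hx x" "deg_le hy y"
    using deg_le_exists by blast
  then have x: "deg_le (max hx hy) x" and y: "deg_le (max hx hy) y"
    by (auto intro: deg_le_mono)
  define N where "N = nat (max hx hy + l) + 1"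
  have N: "max hx hy + l < int N"
    unfolding N_def by linarith
  show "dexpL B Y (x + y) = dexpL B Y x + dexpL B Y y"
    unfolding dexpL_eq_sum[OF Y x N] dexpL_eq_sum[OF Y y N] dexpL_eq_sum[OF Y deg_le_add[OF x y] N]
    by (simp add: linear_add[OF linear_adpow] scaleR_add_right sum.distrib)
next
  fix r x
  obtain h where x: "deg_le h x"
    using deg_le_exists by blast
  define N where "N = nat (h + l) + 1"
  have N: "h + l < int N"
    unfolding N_def by linarith
  show "dexpL B Y (r *\<^sub>R x) = r *\<^sub>R dexpL B Y x"
    unfolding dexpL_eq_sum[OF Y x N] dexpL_eq_sum[OF Y deg_le_scaleR[OF x] N]
    by (simp add: linear_cmul[OF linear_adpow] scaleR_sum_right mult.commute)
qed

lemma deg_le_dexpL_minus_id: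
  assumes Y: "deg_le (-1) Y" and w: "deg_le h w"
  shows "deg_le (h - 1) (dexpL B Y w - w)"
proof -
  define N where "N = nat (h + l)"
  have N: "h + l < int (Suc N)"
    unfolding N_def by linarith
  have "dexpL B Y w - w = (\<Sum>k<N. ((-1) ^ Suc k / fact (Suc (Suc k))) *\<^sub>R adpow B Y (Suc k) w)"
    unfolding dexpL_eq_sum[OF Y w N] sum.lessThan_Suc_shift by simp
  also have "deg_le (h - 1) \<dots>"
    by (intro deg_le_sum deg_le_scaleR deg_le_mono[OF deg_le_adpow[OF Y w]]) simp
  finally show ?thesis .
qed

lemma unipotent_eq_0:
  assumes T: "linear T" "\<And>h w. deg_le h w \<Longrightarrow> deg_le (h - 1) (T w)" and w: "w + T w = 0"
  shows "w = 0"
proof -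
  obtain h where h: "deg_le h w"
    using deg_le_exists by blast
  have "deg_le (h - int n) w" for n
  proof (induction n)
    case (Suc n)
    have "- T w = w"
      using w by (metis add.commute neg_eq_iff_add_eq_0)
    moreover have "deg_le (h - int n - 1) (- T w)"
      using deg_le_scaleR[OF T(2)[OF Suc.IH], of "-1"] by simp
    ultimately show ?case
      by (simp add: algebra_simps)
  qed (use h in simp)
  from this[of "nat (h + l + 1)"] show ?thesis
    by (rule deg_le_below) simp
qed

lemma unipotent_surj:
  assumes T: "linear T" "\<And>h w. deg_le h w \<Longrightarrow> deg_le (h - 1) (T w)" and v: "deg_le h v"
  shows "\<exists>w. deg_le h w \<and> w + T w = v"
proof (cases "h < -l")
  case True
  then show ?thesis
    using deg_le_below[OF v True] linear_0[OF T(1)] v by (intro exI[of _ 0]) simp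
next
  case False
  have solvable: "\<forall>v. deg_le (int n - l - 1) v \<longrightarrow> (\<exists>w. deg_le (int n - l - 1) w \<and> w + T w = v)"
    for n
  proof (induction n)
    case 0
    show ?case
    proof (intro allI impI)
      fix v assume v: "deg_le (int 0 - l - 1) v"
      then have "v = 0"
        by (rule deg_le_below) simp
      then show "\<exists>w. deg_le (int 0 - l - 1) w \<and> w + T w = v"
        using v linear_0[OF T(1)] by (intro exI[of _ 0]) simp
    qed
  next
    case (Suc n)
    show ?case
    proof (intro allI impI)
      fix v assume v: "deg_le (int (Suc n) - l - 1) v"
      have "deg_le (int n - l - 1) (- T v)"
        using deg_le_scaleR[OF T(2)[OF v], of "-1"] by (simp add: algebra_simps)
      then obtain w where w: "deg_le (int n - l - 1) w" "w + T w = - T v"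
        using Suc.IH by blast
      have "deg_le (int (Suc n) - l - 1) (v + w)"
        using deg_le_add[OF v deg_le_mono[OF w(1)]] by simp
      moreover have "(v + w) + T (v + w) = v"
        using w(2) linear_add[OF T(1)] by (simp add: algebra_simps)
      ultimately show "\<exists>w. deg_le (int (Suc n) - l - 1) w \<and> w + T w = v"
        by blast
    qed
  qed
  have "int (nat (h + l + 1)) - l - 1 = h"
    using False by simp
  then show ?thesis
    using solvable[of "nat (h + l + 1)"] v by metis
qed

lemma ex1_dexpL_nset:
  assumes Y: "deg_le (-1) Y" and v: "v \<in> nset G I"
  shows "\<exists>!w. w \<in> nset G I \<and> dexpL B Y w = v"
proof -
  define T where "T = (\<lambda>w. dexpL B Y w - w)"
  have linear_T: "linear T"
    unfolding T_def by (rule linear_compose_sub[OF linear_dexpL[OF Y] linear_ident])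
  have lowers: "deg_le (h - 1) (T w)" if "deg_le h w" for h w
    unfolding T_def by (rule deg_le_dexpL_minus_id[OF Y that])
  have dexpL_T: "dexpL B Y w = w + T w" for w
    by (simp add: T_def)
  obtain w where w: "deg_le (-1) w" "w + T w = v"
    using unipotent_surj[OF linear_T lowers] v unfolding nset_iff by blast
  have "gcompC G (T w) (-1) = 0"
    using lowers[OF w(1)] unfolding deg_le_def by simp
  moreover have "gcompC G v (-1) = gcompC G w (-1) + gcompC G (T w) (-1)"
    by (simp only: w(2)[symmetric] gcompC_add)
  ultimately have "gcompC G w (-1) = gcompC G v (-1)"
    by simp
  then have "w \<in> nset G I"
    using w(1) v by (simp add: nset_iff)
  show ?thesis
  proof (rule ex1I[of _ w])
    show "w \<in> nset G I \<and> dexpL B Y w = v"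
      using \<open>w \<in> nset G I\<close> w(2) by (simp add: dexpL_T)
  next
    fix w' assume w': "w' \<in> nset G I \<and> dexpL B Y w' = v"
    have "(w' - w) + T (w' - w) = (w' + T w') - (w + T w)"
      by (simp only: linear_diff[OF linear_T]) (simp add: algebra_simps)
    also have "\<dots> = 0"
      using w' w(2) by (simp add: dexpL_T)
    finally have "(w' - w) + T (w' - w) = 0" .
    then show "w' = w"
      using unipotent_eq_0[OF linear_T lowers, of "w' - w"] by simp
  qed
qed

lemma expcoord_spec:
  "deg_le (-1) Y \<Longrightarrow> v \<in> nset G I \<Longrightarrow>
    expcoord G I B Y v \<in> nset G I \<and> dexpL B Y (expcoord G I B Y v) = v"
  unfolding expcoord_def by (rule theI'[OF ex1_dexpL_nset])

lemma expcoord_equivariant: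
  assumes "deg_le (-1) Y" "deg_le (-1) Y'" "v \<in> nset G I"
    and "\<And>z. z \<in> nset G I \<Longrightarrow> L z \<in> nset G I"
    and "\<And>w. dexpL B Y' (L w) = L (dexpL B Y w)"
  shows "expcoord G I B Y' (L v) = L (expcoord G I B Y v)"
proof -
  have "L (expcoord G I B Y v) \<in> nset G I \<and> dexpL B Y' (L (expcoord G I B Y v)) = L v"
    using expcoord_spec[OF assms(1,3)] assms(4,5) by metis
  then show ?thesis
    unfolding expcoord_def by (rule the1_equality[OF ex1_dexpL_nset[OF assms(2) assms(4)[OF assms(3)]]])
qed

section \<open>Weighted homogeneity\<close>

lemma dil_eq_dilation: assumes z: "z \<in> nset G I" shows "dil G l t z = dilation t z"
proof (rule gcompC_eqI)
  fix i
  have "gcompC G (dil G l t z) i =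
      (\<Sum>k\<in>{1..l}. if k = -i then cscale (t ^ nat k) (gcompC G z (-k)) else 0)"
    unfolding dil_def gcompC_sum
    by (intro sum.cong) (auto simp: gcompC_cscale gcompC_homogeneous[OF gcompC_in_gradeC])
  also have "\<dots> = (if -i \<in> {1..l} then cscale (t ^ nat (-i)) (gcompC G z i) else 0)"
    by (simp add: sum.delta')
  also have "\<dots> = cscale (t powi (-i)) (gcompC G z i)"
  proof (cases "-i \<in> {1..l}")
    case True
    then show ?thesis
      by (simp add: power_int_def)
  next
    case False
    then have "i \<ge> 0 \<or> i < -l"
      by auto
    then have "gcompC G z i = 0"
      using z gcompC_below[of i z] by (auto simp: nset_iff deg_le_def)
    then show ?thesis
      using False by simp
  qed
  finally show "gcompC G (dil G l t z) i = gcompC G (dilation t z) i"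
    by (simp add: gcompC_dilation)
qed

lemma inf_cr_aut_dilation:
  assumes X: "X \<in> G j" and z: "z \<in> nset G I" and t: "t \<noteq> 0"
  shows "inf_cr_aut G I B X (dilation t z) = dilation t (cscale (t powi j) (inf_cr_aut G I B X z))"
proof -
  define c where "c = t powi j"
  have c: "c \<noteq> 0"
    using t by (simp add: c_def power_int_not_zero)
  have "(X, 0) \<in> gradeC j"
    using X subspace_0[OF subspace_grade] by (simp add: gradeC_def)
  then have X_fixed: "dilation t (cscale c (X, 0)) = (X, 0)"
    using t by (simp add: dilation_cscale dilation_homogeneous cscale_cscale c_def power_int_minus)
  have z_deg: "deg_le (-1) z" and dz_deg: "deg_le (-1) (dilation t z)"
    using z nset_dilation[OF z] by (simp_all add: nset_iff)
  define a where "a = AdExp B (- z) (X, 0)"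
  define v where "v = projn G I a"
  have v: "v \<in> nset G I"
    using projn_spec v_def by blast
  have "AdExp B (- dilation t z) (X, 0) = AdExp B (dilation t (- z)) (dilation t (cscale c (X, 0)))"
    by (simp add: X_fixed linear_neg[OF linear_dilation])
  also have "\<dots> = dilation t (cscale c a)"
    by (simp add: AdExp_dilation[OF t] AdExp_cscale[OF c] a_def)
  finally have "projn G I (AdExp B (- dilation t z) (X, 0)) = dilation t (cscale c v)"
    unfolding v_def
    by (simp add: projn_equivariant linear_dilation nset_dilation g01_dilation mCpart_dilation
        linear_cscale nset_cscale g01_cscale mCpart_cscale)
  moreover have "expcoord G I B (dilation t z) (dilation t (cscale c v)) =
      dilation t (expcoord G I B z (cscale c v))"
    by (rule expcoord_equivariant[where L = "dilation t",
          OF z_deg dz_deg nset_cscale[OF v] nset_dilation dexpL_dilation[OF t]])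
  moreover have "expcoord G I B z (cscale c v) = cscale c (expcoord G I B z v)"
    by (rule expcoord_equivariant[where L = "cscale c", OF z_deg z_deg v nset_cscale dexpL_cscale[OF c]])
  ultimately show ?thesis
    by (simp add: inf_cr_aut_def a_def v_def c_def)
qed

lemma weighted_homog_field_inf_cr_aut:
  assumes "X \<in> G j"
  shows "weighted_homog_field G I l (inf_cr_aut G I B X) j"
  unfolding weighted_homog_field_def
proof (intro ballI allI impI)
  fix z and t :: complex and k assume z: "z \<in> nset G I" and t: "t \<noteq> 0"
  have "gcompC G (inf_cr_aut G I B X (dil G l t z)) (-k)
      = cscale (t powi k * t powi j) (gcompC G (inf_cr_aut G I B X z) (-k))"
    by (simp add: dil_eq_dilation[OF z] inf_cr_aut_dilation[OF assms z t] gcompC_dilation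
        gcompC_cscale cscale_cscale)
  then show "gcompC G (inf_cr_aut G I B X (dil G l t z)) (-k)
      = cscale (t powi (j + k)) (gcompC G (inf_cr_aut G I B X z) (-k))"
    using t by (simp add: power_int_add mult.commute)
qed

end

lemma pseudo_complex_if_pc_fundamental:
  assumes "graded_lie_algebra G B" and "pc_fundamental G B I l"
  shows "pseudo_complex G B I l"
proof unfold_locales
  show "graded G" "bilinear B" "\<And>x y i j. x \<in> G i \<Longrightarrow> y \<in> G j \<Longrightarrow> B x y \<in> G (i + j)"
    using assms(1) by (auto simp: graded_lie_algebra_def lie_bracket_def bilinear_def)
  show "\<And>i. i < -l \<Longrightarrow> G i = {0}"
    and "\<And>x. x \<in> G (-1) \<Longrightarrow> I x \<in> G (-1)" and "\<And>x. x \<in> G (-1) \<Longrightarrow> I (I x) = - x"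
    using assms(2) by (auto simp: pc_fundamental_def)
  show "\<And>x y a b. x \<in> G (-1) \<Longrightarrow> y \<in> G (-1) \<Longrightarrow> I (a *\<^sub>R x + b *\<^sub>R y) = a *\<^sub>R I x + b *\<^sub>R I y"
    using assms(2) unfolding pc_fundamental_def by blast
qed

theorem mainTheorem6:
  fixes G :: "int \<Rightarrow> 'g::real_vector set" and B :: "'g \<Rightarrow> 'g \<Rightarrow> 'g"
    and I :: "'g \<Rightarrow> 'g" and l :: int and j :: int and X :: 'g
  assumes "graded_lie_algebra G B"
    and "pc_fundamental G B I l"
    and "tanaka_prolongation G B I"
    and "X \<in> G j"
  shows "weighted_homog_field G I l (inf_cr_aut G I B X) j"
proof -
  interpret pseudo_complex G B I l
    using pseudo_complex_if_pc_fundamental[OF assms(1,2)] .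
  show ?thesis
    using weighted_homog_field_inf_cr_aut[OF assms(4)] .
qed

end
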